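(* Let $G:\mathbb{R}^n\to\mathbb{R}^m$ be continuously differentiable and define $H:\mathbb{R}^n\to\mathbb{R}^{n+m}$ by $H(v)=\begin{bmatrix} v\\ G(v)\end{bmatrix}$, so that $\nabla H(v)=\begin{bmatrix}I_n\\ \nabla G(v)\end{bmatrix}$. Fix $v_{\mathrm{ref}}\in\mathbb{R}^n$ and let $\nabla G(v_{\mathrm{ref}})=\Psi\Lambda\Phi^\top$ be a reduced singular value decomposition, where $r$ is the rank of $\nabla G(v_{\mathrm{ref}})$, $\Psi\in\mathbb{R}^{m\times r}$ and $\Phi\in\mathbb{R}^{n\times r}$ have orthonormal columns, and $\Lambda\in\mathbb{R}^{r\times r}$ is diagonal with positive diagonal entries. Define $$\widetilde Q=\nabla H(v_{\mathrm{ref}})\big(\nabla H(v_{\mathrm{ref}})^\top\nabla H(v_{\mathrm{ref}})\big)^{-1/2}\in\mathbb{R}^{(n+m)\times n}$$ (the orthonormal factor of the polar decomposition of $\nabla H(v_{\mathrm{ref}})$). Then: (i) For $\xi\in\mathbb{R}^n$, the nonlinear system $\widetilde Q^\top H(v)=\xi$ is equivalent to the system $$(I_n-\Phi\Phi^\top)\xi=(I_n-\Phi\Phi^\top)v,\qquad \Phi\Phi^\top\xi=\Phi\Big[(\Lambda^2+I_r)^{-1/2}\big(\Phi^\top v+\Lambda\Psi^\top G(v)\big)\Big].$$ (ii) The function $$w(v)=\big|\det(\widetilde Q^\top\nabla H(v))\big|^{-1}\exp\Big(-\tfrac12\|H(v)\|^2+\tfrac12\|\widetilde Q^\top H(v)\|^2\Big)$$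 can be written as $$w(v)=\big|\det(\widetilde Q^\top\nabla H(v))\big|^{-1}\exp\Big(-\tfrac12\|G(v)\|^2-\tfrac12\|\Phi^\top v\|^2+\tfrac12\big\|(\Lambda^2+I_r)^{-1/2}\big(\Phi^\top v+\Lambda\Psi^\top G(v)\big)\big\|^2\Big),$$ where $$\big|\det(\widetilde Q^\top\nabla H(v))\big|=\big|\det(\Lambda^2+I_r)^{-1/2}\big|\,\big|\det\big(I_r+\Lambda\Psi^\top\nabla G(v)\Phi\big)\big|.$$
   Context: $\|\cdot\|$ denotes the Euclidean norm; $I_k$ the $k\times k$ identity matrix. The function $w$ is the importance weight (target density over RTO proposal density, up to constants) for the randomize-then-optimize (RTO) proposal built with the orthonormal basis $\widetilde Q$ of the range of $\nabla H(v_{\mathrm{ref}})$, for the target density $\pi(v)\propto\exp(-\frac12\|H(v)\|^2)$. *)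

theory Defs
  imports "HOL-Analysis.Analysis"
begin

definition diag_mat :: "real^'r \<Rightarrow> real^'r^'r" where
  "diag_mat d = (\<chi> i j. if i = j then d $ i else 0)"

definition psd :: "real^'k^'k \<Rightarrow> bool" where
  "psd S \<longleftrightarrow> transpose S = S \<and> (\<forall>x. 0 \<le> x \<bullet> (S *v x))"

definition psd_sqrt :: "real^'k^'k \<Rightarrow> real^'k^'k" where
  "psd_sqrt A = (THE S. psd S \<and> S ** S = A)"

definition inv_sqrt :: "real^'k^'k \<Rightarrow> real^'k^'k" where
  "inv_sqrt A = matrix_inv (psd_sqrt A)"

definition stackH :: "(real^'n \<Rightarrow> real^'m) \<Rightarrow> real^'n \<Rightarrow> real^('n + 'm)" where
  "stackH G v = (\<chi> i. case i of Inl j \<Rightarrow> v $ j | Inr k \<Rightarrow> G v $ k)"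

text \<open>Jacobian matrix of G at v, where G' v is the Frechet derivative of G at v.\<close>
definition jac :: "(real^'n \<Rightarrow> real^'n \<Rightarrow> real^'m) \<Rightarrow> real^'n \<Rightarrow> real^'n^'m" where
  "jac G' v = matrix (G' v)"

definition gradH :: "(real^'n \<Rightarrow> real^'n \<Rightarrow> real^'m) \<Rightarrow> real^'n \<Rightarrow> real^'n^('n + 'm)" where
  "gradH G' v = (\<chi> i j. case i of Inl a \<Rightarrow> (mat 1 :: real^'n^'n) $ a $ j
                                   | Inr k \<Rightarrow> jac G' v $ k $ j)"

definition Qtilde :: "(real^'n \<Rightarrow> real^'n \<Rightarrow> real^'m) \<Rightarrow> real^'n \<Rightarrow> real^'n^('n + 'm)" where
  "Qtilde G' vref = gradH G' vref ** inv_sqrt (transpose (gradH G' vref) ** gradH G' vref)"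

definition rto_weight ::
  "(real^'n \<Rightarrow> real^'m) \<Rightarrow> (real^'n \<Rightarrow> real^'n \<Rightarrow> real^'m) \<Rightarrow> real^'n \<Rightarrow> real^'n \<Rightarrow> real" where
  "rto_weight G G' vref v =
     inverse \<bar>det (transpose (Qtilde G' vref) ** gradH G' v)\<bar> *
     exp (- (1/2) * (norm (stackH G v))\<^sup>2
          + (1/2) * (norm (transpose (Qtilde G' vref) *v stackH G v))\<^sup>2)"

end

theory Submission
  imports Defs
begin

(* The Gram matrix grad H(v_ref)^T grad H(v_ref) = I + Phi Lambda^2 Phi^T acts as Lambda^2 + I
   on the range of Phi and as the identity on its orthogonal complement. Matrices of this shape
   are closed under products and preserve positive semidefiniteness, so by uniqueness of the
   PSD square root (the usual trace argument) Q~^T = T grad H(v_ref)^T, where T acts as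
   (Lambda^2 + I)^(-1/2) on the range of Phi and as the identity elsewhere.
   Since grad H(v_ref)^T H(v) = v + Phi Lambda Psi^T G(v), T splits Q~^T H(v) into its
   components in the orthogonal complement and in the range of Phi: this is (i), and
   Pythagoras gives the exponent in (ii). For the determinant, det T = det (Lambda^2 + I)^(-1/2)
   and det (I_n + Phi K) = det (I_r + K Phi) by Sylvester's identity, which follows from the two
   LDU and UDL block factorisations of [I, -B; C, I]. *)

(* Keep transpose A *v x unrewritten (not x v* A): the lemmas below are stated in that form. *)
declare transpose_matrix_vector [simp del]

lemma sum_UNIV_Plus:
  "sum f (UNIV :: ('a::finite + 'b::finite) set) = (\<Sum>a\<in>UNIV. f (Inl a)) + (\<Sum>b\<in>UNIV. f (Inr b))"
  using sum.Plus[of "UNIV :: 'a set" "UNIV :: 'b set" f] by (simp add: comp_def)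

lemma prod_UNIV_Plus:
  "prod f (UNIV :: ('a::finite + 'b::finite) set) = (\<Prod>a\<in>UNIV. f (Inl a)) * (\<Prod>b\<in>UNIV. f (Inr b))"
  using prod.Plus[of "UNIV :: 'a set" "UNIV :: 'b set" f] by (simp add: comp_def)

lemma matrix_add_rdistrib: "(A + B) ** C = A ** C + B ** (C :: 'a::semiring_1^_^_)"
  by (vector matrix_matrix_mult_def sum.distrib[symmetric] distrib_right)

lemma matrix_diff_ldistrib: "C ** (A - B) = C ** A - C ** (B :: 'a::ring_1^_^_)"
  by (vector matrix_matrix_mult_def sum_subtractf[symmetric] right_diff_distrib)

lemma matrix_diff_rdistrib: "(A - B) ** C = A ** C - B ** (C :: 'a::ring_1^_^_)"
  by (vector matrix_matrix_mult_def sum_subtractf[symmetric] left_diff_distrib)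

lemma matrix_neg_left: "(- A) ** C = - (A ** (C :: 'a::ring_1^_^_))"
  by (vector matrix_matrix_mult_def sum_negf[symmetric])

lemma matrix_neg_right: "C ** (- A) = - (C ** (A :: 'a::ring_1^_^_))"
  by (vector matrix_matrix_mult_def sum_negf[symmetric])

lemma transpose_add: "transpose (A + B) = transpose A + transpose (B :: 'a::plus^_^_)"
  by (vector transpose_def)

lemma transpose_diff: "transpose (A - B) = transpose A - transpose (B :: 'a::ab_group_add^_^_)"
  by (vector transpose_def)

lemma inner_matrix_vector_transpose: "(A *v x) \<bullet> y = x \<bullet> (transpose A *v (y :: real^_))"
  by (metis dot_lmul_matrix inner_commute transpose_matrix_vector)

lemma matrix_inv_unique:
  fixes A :: "'a::semiring_1^'n^'n"
  assumes AB: "A ** B = mat 1" and BA: "B ** A = mat 1"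
  shows "matrix_inv A = B"
proof -
  have "\<exists>A'. A ** A' = mat 1 \<and> A' ** A = mat 1"
    using AB BA by blast
  then have inv: "matrix_inv A ** A = mat 1"
    unfolding matrix_inv_def by (rule someI2_ex) simp
  have "matrix_inv A = matrix_inv A ** (A ** B)" by (simp add: AB)
  also have "\<dots> = B" by (simp add: matrix_mul_assoc inv)
  finally show ?thesis .
qed

section \<open>Determinants of block matrices\<close>

lemma det_triangular_rank:
  fixes A :: "'a::comm_ring_1^'n^'n" and rk :: "'n \<Rightarrow> nat"
  assumes below: "\<And>i j. i \<noteq> j \<Longrightarrow> rk j \<le> rk i \<Longrightarrow> A $ i $ j = 0"
  shows "det A = (\<Prod>i\<in>UNIV. A $ i $ i)"
proof -
  let ?PU = "{p. p permutes (UNIV :: 'n set)}"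
  let ?pp = "\<lambda>p. of_int (sign p) * (\<Prod>i\<in>UNIV. A $ i $ p i)"
  have vanish: "?pp p = 0" if p: "p \<in> ?PU - {id}" for p
  proof -
    have "\<exists>i. p i \<noteq> i \<and> rk (p i) \<le> rk i"
    proof (rule ccontr)
      assume "\<not> ?thesis"
      then have up: "\<And>i. p i \<noteq> i \<Longrightarrow> rk i < rk (p i)" by force
      then have "rk i \<le> rk (p i)" for i by (cases "p i = i") (auto intro: less_imp_le)
      moreover obtain k where "p k \<noteq> k" using p by fastforce
      ultimately have "(\<Sum>i\<in>UNIV. rk i) < (\<Sum>i\<in>UNIV. rk (p i))"
        using up by (intro sum_strict_mono_ex1) auto
      moreover have "(\<Sum>i\<in>UNIV. rk (p i)) = (\<Sum>i\<in>UNIV. rk i)"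
        using p sum.permute[of p UNIV rk] by (simp add: comp_def)
      ultimately show False by simp
    qed
    then show ?thesis using below by (metis (no_types) UNIV_I finite prod_zero mult_zero_right)
  qed
  have "det A = (\<Sum>p\<in>{id}. ?pp p)"
    unfolding det_def using vanish
    by (intro sum.mono_neutral_right) (auto simp: permutes_id finite_permutations)
  then show ?thesis by (simp add: sign_id)
qed

definition block_mat ::
  "'a^'c^'r \<Rightarrow> 'a^'d^'r \<Rightarrow> 'a^'c^'s \<Rightarrow> 'a^'d^'s \<Rightarrow> 'a^('c + 'd)^('r + 's)" where
  "block_mat A B C D = (\<chi> i j. case i of
      Inl a \<Rightarrow> (case j of Inl b \<Rightarrow> A $ a $ b | Inr b \<Rightarrow> B $ a $ b)
    | Inr a \<Rightarrow> (case j of Inl b \<Rightarrow> C $ a $ b | Inr b \<Rightarrow> D $ a $ b))"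

lemma block_mat_nth [simp]:
  "block_mat A B C D $ Inl i $ Inl j = A $ i $ j"
  "block_mat A B C D $ Inl i $ Inr l = B $ i $ l"
  "block_mat A B C D $ Inr k $ Inl j = C $ k $ j"
  "block_mat A B C D $ Inr k $ Inr l = D $ k $ l"
  by (simp_all add: block_mat_def)

lemma block_mat_mult:
  fixes A :: "'a::semiring_1^'c^'r"
  shows "block_mat A B C D ** block_mat E F G H =
    block_mat (A ** E + B ** G) (A ** F + B ** H) (C ** E + D ** G) (C ** F + D ** H)"
  unfolding vec_eq_iff
proof (intro allI)
  fix i j
  show "(block_mat A B C D ** block_mat E F G H) $ i $ j =
    block_mat (A ** E + B ** G) (A ** F + B ** H) (C ** E + D ** G) (C ** F + D ** H) $ i $ j"
    by (cases i; cases j) (simp_all only: matrix_matrix_mult_def vec_lambda_beta sum_UNIV_Plus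
        block_mat_nth vector_add_component)
qed

lemma det_block_mat_unit_upper:
  "det (block_mat (mat 1) B 0 (mat 1) :: 'a::comm_ring_1^('n::finite + 'm::finite)^('n + 'm)) = 1"
proof -
  have "det (block_mat (mat 1) B 0 (mat 1) :: 'a^('n + 'm)^('n + 'm)) =
      (\<Prod>i\<in>UNIV. block_mat (mat 1) B 0 (mat 1) $ i $ i)"
    by (rule det_triangular_rank[where rk = "case_sum (\<lambda>_. 0) (\<lambda>_. 1)"])
      (auto simp: mat_def split: sum.splits)
  then show ?thesis by (simp add: prod_UNIV_Plus mat_def)
qed

lemma det_block_mat_unit_lower:
  "det (block_mat (mat 1) 0 C (mat 1) :: 'a::comm_ring_1^('n::finite + 'm::finite)^('n + 'm)) = 1"
proof -
  have "det (block_mat (mat 1) 0 C (mat 1) :: 'a^('n + 'm)^('n + 'm)) =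
      (\<Prod>i\<in>UNIV. block_mat (mat 1) 0 C (mat 1) $ i $ i)"
    by (rule det_triangular_rank[where rk = "case_sum (\<lambda>_. 1) (\<lambda>_. 0)"])
      (auto simp: mat_def split: sum.splits)
  then show ?thesis by (simp add: prod_UNIV_Plus mat_def)
qed

lemma det_row_operation_scaleR:
  fixes A :: "real^'n^'n"
  assumes "i \<noteq> j"
  shows "det (\<chi> k. if k = i then row i A + c *\<^sub>R row j A else row k A) = det A"
  using det_row_operation[OF assms, of A c] unfolding scalar_mult_eq_scaleR .

lemma det_block_diag_diagonal:
  fixes A :: "real^'n^'n" and D :: "real^'m^'m"
  assumes D: "\<And>i j. i \<noteq> j \<Longrightarrow> D $ i $ j = 0"
  shows "det (block_mat A 0 0 D) = det A * det D"
proof (induction A rule: induct_matrix_row_operations[case_names zero_row diagonal swap_cols row_op])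
  case (zero_row A i)
  then have "row (Inl i) (block_mat A 0 0 D :: real^('n + 'm)^('n + 'm)) = 0"
    by (simp add: vec_eq_iff row_def split_sum_all)
  with zero_row show ?case by (simp add: det_zero_row(1)[of i] det_zero_row(1)[of "Inl i"])
next
  case (diagonal A)
  have "block_mat A 0 0 D $ i $ j = 0" if "i \<noteq> j" for i j
    using diagonal D that by (cases i; cases j) auto
  with diagonal D show ?case by (simp add: det_diagonal prod_UNIV_Plus)
next
  case (swap_cols A m n)
  have "block_mat (\<chi> i j. A $ i $ Transposition.transpose m n j) 0 0 D =
      (\<chi> i j. block_mat A 0 0 D $ i $ Transposition.transpose (Inl m) (Inl n) j)"
    by (auto simp: vec_eq_iff split_sum_all Transposition.transpose_def)
  then show ?case using swap_cols
    by (simp add: det_permute_columns permutes_swap_id sign_swap_id)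
next
  case (row_op A m n c)
  have "block_mat (\<chi> i. if i = m then row m A + c *\<^sub>R row n A else row i A) 0 0 D =
      (\<chi> k. if k = Inl m
        then row (Inl m) (block_mat A 0 0 D) + c *\<^sub>R row (Inl n) (block_mat A 0 0 D)
        else row k (block_mat A 0 0 D))"
    by (simp add: vec_eq_iff row_def split_sum_all)
  then show ?case
    using row_op by (simp add: det_row_operation_scaleR)
qed

lemma det_block_diag:
  fixes A :: "real^'n^'n" and D :: "real^'m^'m"
  shows "det (block_mat A 0 0 D) = det A * det D"
proof (induction D rule: induct_matrix_row_operations[case_names zero_row diagonal swap_cols row_op])
  case (zero_row D i)
  then have "row (Inr i) (block_mat A 0 0 D :: real^('n + 'm)^('n + 'm)) = 0"
    by (simp add: vec_eq_iff row_def split_sum_all)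
  with zero_row show ?case by (simp add: det_zero_row(1)[of i] det_zero_row(1)[of "Inr i"])
next
  case (diagonal D)
  then show ?case by (rule det_block_diag_diagonal)
next
  case (swap_cols D m n)
  have "block_mat A 0 0 (\<chi> i j. D $ i $ Transposition.transpose m n j) =
      (\<chi> i j. block_mat A 0 0 D $ i $ Transposition.transpose (Inr m) (Inr n) j)"
    by (auto simp: vec_eq_iff split_sum_all Transposition.transpose_def)
  then show ?case using swap_cols
    by (simp add: det_permute_columns permutes_swap_id sign_swap_id)
next
  case (row_op D m n c)
  have "block_mat A 0 0 (\<chi> i. if i = m then row m D + c *\<^sub>R row n D else row i D) =
      (\<chi> k. if k = Inr m
        then row (Inr m) (block_mat A 0 0 D) + c *\<^sub>R row (Inr n) (block_mat A 0 0 D)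
        else row k (block_mat A 0 0 D))"
    by (simp add: vec_eq_iff row_def split_sum_all)
  then show ?case
    using row_op by (simp add: det_row_operation_scaleR)
qed

lemma det_mat1_add_mult_commute:
  fixes B :: "real^'r^'n" and C :: "real^'n^'r"
  shows "det (mat 1 + B ** C) = det (mat 1 + C ** B)"
proof -
  let ?M = "block_mat (mat 1) (- B) C (mat 1) :: real^('n + 'r)^('n + 'r)"
  have "?M = block_mat (mat 1) 0 C (mat 1) **
      (block_mat (mat 1) 0 0 (mat 1 + C ** B) ** block_mat (mat 1) (- B) 0 (mat 1))"
    by (simp add: block_mat_mult matrix_neg_right matrix_add_rdistrib)
  then have "det ?M = det (mat 1 + C ** B)"
    by (simp add: det_mul det_block_mat_unit_lower det_block_mat_unit_upper det_block_diag)
  moreover have "?M = (block_mat (mat 1) (- B) 0 (mat 1) **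
      block_mat (mat 1 + B ** C) 0 0 (mat 1)) ** block_mat (mat 1) 0 C (mat 1)"
    by (simp add: block_mat_mult matrix_neg_left matrix_add_rdistrib matrix_add_ldistrib
        matrix_mul_assoc)
  then have "det ?M = det (mat 1 + B ** C)"
    by (simp add: det_mul det_block_mat_unit_lower det_block_mat_unit_upper det_block_diag)
  ultimately show ?thesis by simp
qed

section \<open>Positive semidefinite square roots\<close>

lemma nonneg_quadratic_linear_coeff_eq_0:
  fixes a b :: real
  assumes "\<And>t. 0 \<le> a * t + b * t\<^sup>2"
  shows "a = 0"
proof -
  define c where "c = \<bar>b\<bar> + 1"
  define t where "t = - a / c"
  have c: "c > 0" by (simp add: c_def add_nonneg_pos)
  have "a * t + b * t\<^sup>2 \<le> a * t + (c - 1) * t\<^sup>2"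
    by (simp add: c_def mult_right_mono)
  also have "\<dots> = - a\<^sup>2 / c\<^sup>2"
    using c by (simp add: t_def field_simps power2_eq_square)
  finally have "a\<^sup>2 / c\<^sup>2 \<le> 0" using assms[of t] by linarith
  then show ?thesis using c by (simp add: divide_le_0_iff)
qed

lemma psd_mat1: "psd (mat 1)"
  by (simp add: psd_def)

lemma psd_add: "psd A \<Longrightarrow> psd B \<Longrightarrow> psd (A + B)"
  by (simp add: psd_def transpose_def vec_eq_iff matrix_vector_mult_add_rdistrib inner_add_right)

lemma psd_congruence:
  assumes "psd S"
  shows "psd (A ** S ** transpose A)"
proof -
  have "x \<bullet> ((A ** S ** transpose A) *v x) =
      (transpose A *v x) \<bullet> (S *v (transpose A *v x))" for x
    by (simp add: matrix_vector_mul_assoc[symmetric] inner_matrix_vector_transpose)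
  with assms show ?thesis
    by (simp add: psd_def matrix_transpose_mul matrix_mul_assoc)
qed

lemma psd_quadratic_form_eq_0D:
  assumes S: "psd S" and x: "x \<bullet> (S *v x) = 0"
  shows "S *v x = 0"
proof -
  define z where "z = S *v x"
  have "x \<bullet> (S *v z) = z \<bullet> z"
    using S by (simp add: psd_def z_def inner_commute inner_matrix_vector_transpose)
  then have "(x + t *\<^sub>R z) \<bullet> (S *v (x + t *\<^sub>R z)) =
      2 * (z \<bullet> z) * t + (z \<bullet> (S *v z)) * t\<^sup>2" for t
    using x by (simp add: z_def matrix_vector_right_distrib matrix_vector_mult_scaleR
        inner_add_left inner_add_right inner_commute[of z x] power2_eq_square algebra_simps)
  then have "0 \<le> 2 * (z \<bullet> z) * t + (z \<bullet> (S *v z)) * t\<^sup>2" for t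
    using S unfolding psd_def by metis
  then have "2 * (z \<bullet> z) = 0" by (rule nonneg_quadratic_linear_coeff_eq_0)
  then show ?thesis by (simp add: z_def)
qed

lemma trace_congruence:
  "trace (transpose M ** S ** M) = (\<Sum>i\<in>UNIV. column i M \<bullet> (S *v column i (M :: real^_^_)))"
  unfolding trace_def
proof (rule sum.cong)
  fix i
  show "(transpose M ** S ** M) $ i $ i = column i M \<bullet> (S *v column i M)"
    unfolding matrix_matrix_mult_def matrix_vector_mult_def inner_vec_def transpose_def column_def
    by (simp add: sum_distrib_left sum_distrib_right mult.assoc) (rule sum.swap)
qed simp

lemma psd_trace_congruence_nonneg: "psd S \<Longrightarrow> 0 \<le> trace (transpose M ** S ** M)"
  unfolding trace_congruence psd_def by (simp add: sum_nonneg)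

lemma psd_trace_congruence_eq_0:
  assumes S: "psd S" and tr: "trace (transpose M ** S ** M) = 0"
  shows "S ** M = 0"
proof -
  have "column i M \<bullet> (S *v column i M) = 0" for i
    using S tr unfolding trace_congruence psd_def by (simp add: sum_nonneg_eq_0_iff)
  then have "S *v column i M = 0" for i
    using S psd_quadratic_form_eq_0D by blast
  then show ?thesis
    by (simp add: vec_eq_iff matrix_matrix_mult_def matrix_vector_mult_def column_def)
qed

lemma psd_sqrt_unique:
  fixes S T :: "real^'n^'n"
  assumes S: "psd S" and T: "psd T" and eq: "S ** S = T ** T"
  shows "S = T"
proof -
  define X where "X = S - T"
  have Xt: "transpose X = X"
    using S T by (simp add: X_def psd_def transpose_diff)
  have "S ** X = - (X ** T)"
    using eq by (simp add: X_def matrix_diff_ldistrib matrix_diff_rdistrib matrix_mul_assoc)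
  then have "trace (X ** S ** X) = - trace ((X ** X) ** T)"
    by (simp add: matrix_mul_assoc[symmetric] matrix_neg_right trace_def sum_negf)
  also have "trace ((X ** X) ** T) = trace (X ** T ** X)"
    by (metis matrix_mul_assoc trace_mul_sym)
  finally have "trace (transpose X ** S ** X) + trace (transpose X ** T ** X) = 0"
    by (simp add: Xt)
  then have "trace (transpose X ** S ** X) = 0" "trace (transpose X ** T ** X) = 0"
    using psd_trace_congruence_nonneg[OF S, of X] psd_trace_congruence_nonneg[OF T, of X]
    by linarith+
  then have "S ** X = 0" "T ** X = 0"
    by (simp_all add: psd_trace_congruence_eq_0[OF S] psd_trace_congruence_eq_0[OF T])
  then have "X ** X = 0"
    by (simp add: X_def matrix_diff_rdistrib)
  then have "trace (transpose X ** mat 1 ** X) = 0"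
    by (simp add: Xt trace_def)
  then have "X = 0"
    using psd_trace_congruence_eq_0[OF psd_mat1] by simp
  then show ?thesis by (simp add: X_def)
qed

lemma psd_sqrt_eq: "psd S \<Longrightarrow> S ** S = A \<Longrightarrow> psd_sqrt A = S"
  unfolding psd_sqrt_def by (rule the_equality) (auto intro: psd_sqrt_unique)

lemma inv_sqrt_eq:
  assumes "psd S" "S ** S = A" "S ** S' = mat 1" "S' ** S = mat 1"
  shows "inv_sqrt A = S'"
  using assms by (simp add: inv_sqrt_def psd_sqrt_eq matrix_inv_unique)

lemma diag_mat_mult: "diag_mat d ** diag_mat e = diag_mat (\<chi> i. d $ i * e $ i)"
  by (simp add: diag_mat_def matrix_matrix_mult_def vec_eq_iff if_distrib[of "\<lambda>u. u * _"]
      cong: if_cong)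

lemma diag_mat_add: "diag_mat d + diag_mat e = diag_mat (\<chi> i. d $ i + e $ i)"
  by (simp add: diag_mat_def vec_eq_iff)

lemma mat1_eq_diag_mat: "mat 1 = diag_mat (\<chi> i. 1)"
  by (simp add: diag_mat_def mat_def vec_eq_iff)

lemma transpose_diag_mat [simp]: "transpose (diag_mat d) = diag_mat d"
  by (simp add: diag_mat_def transpose_def vec_eq_iff)

lemma psd_diag_mat:
  assumes "\<And>i. 0 \<le> d $ i"
  shows "psd (diag_mat d)"
proof -
  have "diag_mat d *v x = (\<chi> i. d $ i * x $ i)" for x
    by (simp add: diag_mat_def matrix_vector_mult_def vec_eq_iff if_distrib[of "\<lambda>u. u * _"]
        cong: if_cong)
  with assms show ?thesis
    by (simp add: psd_def inner_vec_def sum_nonneg mult.left_commute[of _ "d $ _"])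
qed

section \<open>Matrices with orthonormal columns\<close>

lemma orthonormal_cols_projections:
  fixes P :: "real^'r^'n"
  assumes P: "transpose P ** P = mat 1"
  shows "P ** transpose P ** P = P"
    and "(mat 1 - P ** transpose P) ** P = 0"
    and "P ** transpose P ** (mat 1 - P ** transpose P) = 0"
    and "(mat 1 - P ** transpose P) ** (mat 1 - P ** transpose P) = mat 1 - P ** transpose P"
proof -
  show PPtP: "P ** transpose P ** P = P"
    by (simp add: matrix_mul_assoc[symmetric] P)
  show "(mat 1 - P ** transpose P) ** P = 0"
    by (simp add: matrix_diff_rdistrib PPtP)
  then show "P ** transpose P ** (mat 1 - P ** transpose P) = 0"
    by (simp add: matrix_diff_ldistrib matrix_mul_assoc PPtP)
  then show "(mat 1 - P ** transpose P) ** (mat 1 - P ** transpose P) = mat 1 - P ** transpose P"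
    by (simp add: matrix_diff_rdistrib)
qed

lemma orthonormal_cols_norm:
  fixes P :: "real^'r^'n"
  assumes P: "transpose P ** P = mat 1"
  shows "norm (P *v x) = norm x"
  using P by (simp add: norm_eq_sqrt_inner inner_matrix_vector_transpose matrix_vector_mul_assoc)

lemma orthogonal_complement_range:
  fixes P :: "real^'r^'n"
  assumes P: "transpose P ** P = mat 1"
  shows "orthogonal ((mat 1 - P ** transpose P) *v a) (P *v b)"
  unfolding orthogonal_def inner_matrix_vector_transpose
  by (simp add: matrix_vector_mul_assoc matrix_transpose_mul transpose_diff
      orthonormal_cols_projections[OF P])

lemma orth_components_eq_iff:
  fixes P :: "real^'r^'n"
  assumes P: "transpose P ** P = mat 1"
  shows "((mat 1 - P ** transpose P) *v a + P *v b = \<xi>) \<longleftrightarrow>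
    (mat 1 - P ** transpose P) *v \<xi> = (mat 1 - P ** transpose P) *v a \<and>
    (P ** transpose P) *v \<xi> = P *v b"
proof -
  have "(mat 1 - P ** transpose P) *v ((mat 1 - P ** transpose P) *v a + P *v b) =
      (mat 1 - P ** transpose P) *v a"
    "(P ** transpose P) *v ((mat 1 - P ** transpose P) *v a + P *v b) = P *v b"
    by (simp_all add: matrix_vector_right_distrib matrix_vector_mul_assoc
        orthonormal_cols_projections[OF P])
  moreover have "\<xi> = (mat 1 - P ** transpose P) *v \<xi> + (P ** transpose P) *v \<xi>"
    by (simp add: matrix_vector_mult_diff_rdistrib)
  ultimately show ?thesis by metis
qed

lemma norm_orth_components:
  fixes P :: "real^'r^'n"
  assumes P: "transpose P ** P = mat 1"
  shows "(norm ((mat 1 - P ** transpose P) *v a + P *v b))\<^sup>2 =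
    (norm a)\<^sup>2 - (norm (transpose P *v a))\<^sup>2 + (norm b)\<^sup>2"
proof -
  have "a = (mat 1 - P ** transpose P) *v a + P *v (transpose P *v a)"
    by (simp add: matrix_vector_mult_diff_rdistrib matrix_vector_mul_assoc)
  then have "(norm a)\<^sup>2 =
      (norm ((mat 1 - P ** transpose P) *v a))\<^sup>2 + (norm (transpose P *v a))\<^sup>2"
    by (metis norm_add_Pythagorean orthogonal_complement_range[OF P] orthonormal_cols_norm[OF P])
  then show ?thesis
    by (simp add: norm_add_Pythagorean orthogonal_complement_range[OF P] orthonormal_cols_norm[OF P])
qed

(* For P with orthonormal columns, range_extend P X acts as P X P^T on the range of P and as the
   identity on its orthogonal complement. *)
definition range_extend :: "real^'r^'n \<Rightarrow> real^'r^'r \<Rightarrow> real^'n^'n" where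
  "range_extend P X = mat 1 + P ** (X - mat 1) ** transpose P"

lemma range_extend_mat1 [simp]: "range_extend P (mat 1) = mat 1"
  by (simp add: range_extend_def)

lemma transpose_range_extend: "transpose (range_extend P X) = range_extend P (transpose X)"
  by (simp add: range_extend_def transpose_add transpose_diff matrix_transpose_mul matrix_mul_assoc)

lemma range_extend_mult:
  assumes P: "transpose P ** P = mat 1"
  shows "range_extend P X ** range_extend P Y = range_extend P (X ** Y)"
proof -
  have "P ** (X - mat 1) ** transpose P ** (P ** (Y - mat 1) ** transpose P) =
      P ** ((X - mat 1) ** (Y - mat 1)) ** transpose P"
    by (simp add: matrix_mul_assoc) (simp add: matrix_mul_assoc[symmetric] P)
  then show ?thesis
    by (simp add: range_extend_def matrix_add_ldistrib matrix_add_rdistrib matrix_diff_ldistrib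
        matrix_diff_rdistrib algebra_simps)
qed

lemma psd_range_extend:
  assumes P: "transpose P ** P = mat 1" and X: "psd X"
  shows "psd (range_extend P X)"
proof -
  let ?C = "mat 1 - P ** transpose P"
  have "?C ** transpose ?C = ?C"
    by (simp add: transpose_diff matrix_transpose_mul matrix_diff_ldistrib matrix_diff_rdistrib
        matrix_mul_assoc) (simp add: matrix_mul_assoc[symmetric] P)
  then have "range_extend P X = ?C ** mat 1 ** transpose ?C + P ** X ** transpose P"
    by (simp add: range_extend_def matrix_diff_ldistrib matrix_diff_rdistrib)
  moreover have "psd (?C ** mat 1 ** transpose ?C)" "psd (P ** X ** transpose P)"
    using psd_congruence psd_mat1 X by blast+
  ultimately show ?thesis
    by (simp only: psd_add)
qed

lemma det_range_extend:
  assumes P: "transpose P ** P = mat 1"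
  shows "det (range_extend P X) = det X"
proof -
  have "det (range_extend P X) = det (mat 1 + P ** ((X - mat 1) ** transpose P))"
    by (simp add: range_extend_def matrix_mul_assoc)
  also have "\<dots> = det (mat 1 + (X - mat 1) ** transpose P ** P)"
    by (rule det_mat1_add_mult_commute)
  also have "(X - mat 1) ** transpose P ** P = X - mat 1"
    by (simp add: matrix_mul_assoc[symmetric] P)
  finally show ?thesis by simp
qed

lemma inv_sqrt_range_extend:
  assumes P: "transpose P ** P = mat 1"
    and S: "psd S" "S ** S = A" and S': "S ** S' = mat 1" "S' ** S = mat 1"
  shows "inv_sqrt (range_extend P A) = range_extend P S'"
  by (rule inv_sqrt_eq[where S = "range_extend P S"])
    (simp_all add: range_extend_mult[OF P] psd_range_extend[OF P] S S')

lemma range_extend_mult_vector: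
  assumes P: "transpose P ** P = mat 1"
  shows "range_extend P X *v (v + P *v a) =
    (mat 1 - P ** transpose P) *v v + P *v (X *v (transpose P *v v + a))"
proof -
  have "transpose P *v (v + P *v a) = transpose P *v v + a"
    by (simp add: matrix_vector_right_distrib matrix_vector_mul_assoc P)
  then show ?thesis
    by (simp add: range_extend_def matrix_vector_mult_add_rdistrib matrix_vector_mult_diff_rdistrib
        matrix_vector_mult_diff_distrib matrix_vector_right_distrib matrix_vector_mul_assoc[symmetric])
qed

section \<open>The RTO map\<close>

lemma gradH_transpose_stackH:
  "transpose (gradH G' u) *v stackH G v = v + transpose (jac G' u) *v G v"
proof -
  have "(transpose (gradH G' u) *v stackH G v) $ k = (v + transpose (jac G' u) *v G v) $ k" for k
  proof -
    have "(transpose (gradH G' u) *v stackH G v) $ k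
        = (\<Sum>a\<in>UNIV. mat 1 $ a $ k * v $ a) + (\<Sum>b\<in>UNIV. jac G' u $ b $ k * G v $ b)"
      by (simp only: matrix_vector_mult_def transpose_def vec_lambda_beta sum_UNIV_Plus gradH_def
          stackH_def sum.case_distrib sum.simps)
    also have "\<dots> = (v + transpose (jac G' u) *v G v) $ k"
      by (simp add: mat_def matrix_vector_mult_def transpose_def if_distrib[of "\<lambda>x. x * _"]
          cong: if_cong)
    finally show ?thesis .
  qed
  then show ?thesis by (simp add: vec_eq_iff)
qed

lemma gradH_transpose_gradH:
  "transpose (gradH G' u) ** gradH G' w = mat 1 + transpose (jac G' u) ** jac G' w"
proof -
  have "(transpose (gradH G' u) ** gradH G' w) $ k $ l
      = (\<Sum>a\<in>UNIV. mat 1 $ a $ k * mat 1 $ a $ l) + (\<Sum>b\<in>UNIV. jac G' u $ b $ k * jac G' w $ b $ l)"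
    for k l
    by (simp only: matrix_matrix_mult_def transpose_def vec_lambda_beta sum_UNIV_Plus gradH_def
        sum.simps)
  then show ?thesis
    by (simp add: vec_eq_iff mat_def matrix_matrix_mult_def transpose_def
        if_distrib[of "\<lambda>x. x * _"] cong: if_cong)
qed

lemma norm_stackH: "(norm (stackH G v))\<^sup>2 = (norm v)\<^sup>2 + (norm (G v))\<^sup>2"
  by (simp only: power2_norm_eq_inner inner_vec_def sum_UNIV_Plus stackH_def vec_lambda_beta
      sum.simps)

lemma Qtilde_svd:
  fixes Psi :: "real^'r^'m" and Phi :: "real^'r^'n" and lam :: "real^'r"
  assumes svd: "jac G' vref = Psi ** diag_mat lam ** transpose Phi"
    and Psi: "transpose Psi ** Psi = mat 1"
    and Phi: "transpose Phi ** Phi = mat 1"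
  shows "transpose (Qtilde G' vref) =
    range_extend Phi (inv_sqrt (diag_mat lam ** diag_mat lam + mat 1)) ** transpose (gradH G' vref)"
proof -
  define d where "d = (\<chi> i. (lam $ i)\<^sup>2 + 1)"
  define S where "S = diag_mat (\<chi> i. sqrt (d $ i))"
  define S' where "S' = diag_mat (\<chi> i. inverse (sqrt (d $ i)))"
  have d_pos: "0 < d $ i" for i
    by (simp add: d_def add_nonneg_pos)
  have M: "diag_mat lam ** diag_mat lam + mat 1 = diag_mat d"
    by (simp add: diag_mat_mult mat1_eq_diag_mat diag_mat_add d_def power2_eq_square)
  have "sqrt (d $ i) \<noteq> 0" for i
    using d_pos[of i] by simp
  then have S: "psd S" "S ** S = diag_mat d" "S ** S' = mat 1" "S' ** S = mat 1"
    using d_pos by (simp_all add: S_def S'_def psd_diag_mat diag_mat_mult mat1_eq_diag_mat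
        less_imp_le)
  have "transpose (gradH G' vref) ** gradH G' vref =
      mat 1 + Phi ** diag_mat lam ** (transpose Psi ** Psi) ** diag_mat lam ** transpose Phi"
    by (simp add: gradH_transpose_gradH svd matrix_transpose_mul matrix_mul_assoc)
  also have "\<dots> = range_extend Phi (diag_mat d)"
    by (simp add: range_extend_def Psi M[symmetric] matrix_mul_assoc)
  finally have "inv_sqrt (transpose (gradH G' vref) ** gradH G' vref) = range_extend Phi S'"
    using inv_sqrt_range_extend[OF Phi S] by simp
  moreover have "inv_sqrt (diag_mat lam ** diag_mat lam + mat 1) = S'"
    unfolding M using S by (rule inv_sqrt_eq)
  ultimately show ?thesis
    by (simp add: Qtilde_def matrix_transpose_mul transpose_range_extend S'_def)
qed

theorem proposition3p1:
  fixes G :: "real^'n \<Rightarrow> real^'m"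
    and G' :: "real^'n \<Rightarrow> real^'n \<Rightarrow> real^'m"
    and vref :: "real^'n"
    and Psi :: "real^'r^'m" and Phi :: "real^'r^'n" and lam :: "real^'r"
  assumes deriv: "\<And>v. (G has_derivative G' v) (at v)"
    and cont: "continuous_on UNIV (\<lambda>v. jac G' v)"
    and svd: "jac G' vref = Psi ** diag_mat lam ** transpose Phi"
    and Psi_orth: "transpose Psi ** Psi = mat 1"
    and Phi_orth: "transpose Phi ** Phi = mat 1"
    and lam_pos: "\<And>i. lam $ i > 0"
  shows
    "(\<forall>\<xi> v. (transpose (Qtilde G' vref) *v stackH G v = \<xi>) \<longleftrightarrow>
        ((mat 1 - Phi ** transpose Phi) *v \<xi> = (mat 1 - Phi ** transpose Phi) *v v \<and>
         (Phi ** transpose Phi) *v \<xi> =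
           Phi *v (inv_sqrt (diag_mat lam ** diag_mat lam + mat 1) *v
                    (transpose Phi *v v + diag_mat lam *v (transpose Psi *v G v)))))
     \<and>
     (\<forall>v. rto_weight G G' vref v =
        inverse \<bar>det (transpose (Qtilde G' vref) ** gradH G' v)\<bar> *
        exp (- (1/2) * (norm (G v))\<^sup>2 - (1/2) * (norm (transpose Phi *v v))\<^sup>2
             + (1/2) * (norm (inv_sqrt (diag_mat lam ** diag_mat lam + mat 1) *v
                    (transpose Phi *v v + diag_mat lam *v (transpose Psi *v G v))))\<^sup>2))
     \<and>
     (\<forall>v. \<bar>det (transpose (Qtilde G' vref) ** gradH G' v)\<bar> =
        \<bar>det (inv_sqrt (diag_mat lam ** diag_mat lam + mat 1))\<bar> *
        \<bar>det (mat 1 + diag_mat lam ** transpose Psi ** jac G' v ** Phi)\<bar>)"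
proof -
  define L where "L = diag_mat lam"
  define N where "N = inv_sqrt (L ** L + mat 1)"
  define y where "y v = transpose Phi *v v + L *v (transpose Psi *v G v)" for v
  have Qt: "transpose (Qtilde G' vref) = range_extend Phi N ** transpose (gradH G' vref)"
    using Qtilde_svd[OF svd Psi_orth Phi_orth] by (simp add: N_def L_def)
  have Jt: "transpose (jac G' vref) = Phi ** (L ** transpose Psi)"
    by (simp add: svd L_def matrix_transpose_mul matrix_mul_assoc)
  have QH: "transpose (Qtilde G' vref) *v stackH G v =
      (mat 1 - Phi ** transpose Phi) *v v + Phi *v (N *v y v)" for v
    by (simp add: Qt Jt y_def gradH_transpose_stackH range_extend_mult_vector[OF Phi_orth]
        matrix_vector_mul_assoc[symmetric])
  have "\<bar>det (transpose (Qtilde G' vref) ** gradH G' v)\<bar> =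
      \<bar>det N\<bar> * \<bar>det (mat 1 + Phi ** (L ** transpose Psi ** jac G' v))\<bar>" for v
    by (simp add: Qt gradH_transpose_gradH Jt matrix_mul_assoc[symmetric] det_mul abs_mult
        det_range_extend[OF Phi_orth])
  then have detQ: "\<bar>det (transpose (Qtilde G' vref) ** gradH G' v)\<bar> =
      \<bar>det N\<bar> * \<bar>det (mat 1 + L ** transpose Psi ** jac G' v ** Phi)\<bar>" for v
    by (simp add: det_mat1_add_mult_commute[of Phi])
  show ?thesis
    unfolding L_def[symmetric] N_def[symmetric] rto_weight_def QH detQ y_def
      orth_components_eq_iff[OF Phi_orth] norm_stackH norm_orth_components[OF Phi_orth]
    by (simp add: algebra_simps)
qed

end
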